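(* Let $\pi$ be a probability measure on $\mathsf{X}$, and for each $x\in\mathsf{X}$ let $Q_{x}$ be the law of a random variable $W=\prod_{t=1}^{T}W_{t}$, where $W_{1},\dots,W_{T}$ are independent and nonnegative and each $W_{t}=\frac{1}{N}\sum_{i=1}^{N}W_{t,i}$ is an average of nonnegative, independent and identically distributed random variables $W_{t,1},\dots,W_{t,N}$ with mean $1$ (their laws may depend on $x$). Let $\tilde{\pi}_{x}(\mathrm{d}w):=wQ_{x}(\mathrm{d}w)$. Assume that for some integer $p\ge2$ and every $x\in\mathsf{X}$, $\max_{t\in\{1,\dots,T\}}\mathbb{E}[W_{t,1}^{p}]<\infty$. Then there exists a function $M_{p}:\mathsf{X}\to\mathbb{R}_{+}$ such that if \[ N\ge\alpha T+\tfrac{1}{2}+\sqrt{\alpha T} \] for some $\alpha>0$, then for all $s>0$, \[ \int\pi(\mathrm{d}x)\,\tilde{\pi}_{x}(W\ge s)\le s^{-p+1}\int\pi(\mathrm{d}x)\exp\Big(\frac{M_{p}(x)}{\alpha}\Big). \]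
   Context: $\mathbb{R}_{+}=(0,\infty)$. The expectation $\mathbb{E}[W_{t,1}^{p}]$ is under the law determined by $x$. *)

theory Defs
  imports "HOL-Probability.Probability"
begin

definition W_prod :: "nat \<Rightarrow> nat \<Rightarrow> (nat \<times> nat \<Rightarrow> real) \<Rightarrow> real" where
  "W_prod T N \<omega> = (\<Prod>t\<in>{1..T}. (\<Sum>i<N. \<omega> (t, i)) / real N)"

definition Q_law :: "('x \<Rightarrow> nat \<Rightarrow> real measure) \<Rightarrow> nat \<Rightarrow> nat \<Rightarrow> 'x \<Rightarrow> real measure" where
  "Q_law \<mu> T N x = distr (PiM ({1..T} \<times> {..<N}) (\<lambda>(t, i). \<mu> x t)) borel (W_prod T N)"

definition tilde_pi :: "('x \<Rightarrow> nat \<Rightarrow> real measure) \<Rightarrow> nat \<Rightarrow> nat \<Rightarrow> 'x \<Rightarrow> real set \<Rightarrow> ennreal" where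
  "tilde_pi \<mu> T N x A = (\<integral>\<^sup>+ w\<in>A. ennreal w \<partial>(Q_law \<mu> T N x))"

end

theory Submission
  imports Defs
begin

(* By Markov's inequality for the size-biased law, tilde_pi_x [s, oo) = E[W; W >= s] is at most
   s^(1-p) E[W^p], and by independence E[W^p] is the product of the E[W_t^p]. Expanding
   (S_n + Y)^j binomially, where S_n is a sum of n i.i.d. copies of Y with E Y = 1 and
   E Y^i <= B for 2 <= i <= p, gives by induction on n the bound E S_n^j <= n^j + K_j (n+1)^(j-1)
   with K_j depending only on B and j. Hence E[W_t^p] <= 1 + c_t / N, and the product over t is
   at most exp (sum_t c_t / N) <= exp (M(x) / alpha) as soon as N >= alpha. *)

(* The constant K_j of the header. In K_(j+1) = (j+1) K_j + B 2^(j+1) (1 + K_j) the first term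
   absorbs the cross term (j+1) E[S_n^j] and the second the binomial terms with E Y^i, i >= 2. *)
fun sum_moment_const :: "real \<Rightarrow> nat \<Rightarrow> real" where
  "sum_moment_const B 0 = 0"
| "sum_moment_const B (Suc j) =
     real (Suc j) * sum_moment_const B j + B * 2 ^ Suc j * (1 + sum_moment_const B j)"

definition sum_moment_bound :: "real \<Rightarrow> nat \<Rightarrow> nat \<Rightarrow> real" where
  "sum_moment_bound B j n = real n ^ j + sum_moment_const B j * (real n + 1) ^ (j - 1)"

definition moment_majorant :: "real \<Rightarrow> nat \<Rightarrow> real" where
  "moment_majorant B i = (if i \<le> 1 then 1 else B)"

lemma sum_moment_const_nonneg: "B \<ge> 0 \<Longrightarrow> sum_moment_const B j \<ge> 0"
  by (induction j) auto

lemma sum_moment_const_mono: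
  assumes "B \<ge> 0" "k \<le> j"
  shows "sum_moment_const B k \<le> sum_moment_const B j"
  using assms(2)
proof (induction j rule: dec_induct)
  case (step j)
  have "sum_moment_const B j \<le> sum_moment_const B (Suc j)"
    using sum_moment_const_nonneg[OF assms(1), of j] assms(1)
    by (simp add: distrib_right add_increasing2)
  with step.IH show ?case by simp
qed simp

lemma sum_moment_bound_nonneg: "B \<ge> 0 \<Longrightarrow> sum_moment_bound B j n \<ge> 0"
  unfolding sum_moment_bound_def using sum_moment_const_nonneg by simp

lemma sum_moment_bound_le:
  assumes "B \<ge> 0" "k \<le> m"
  shows "sum_moment_bound B k n \<le> (1 + sum_moment_const B m) * (real n + 1) ^ m"
proof -
  have "real n ^ k \<le> (real n + 1) ^ m"
    by (rule order_trans[of _ "(real n + 1) ^ k"]) (auto intro: power_mono power_increasing assms)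
  moreover have "sum_moment_const B k * (real n + 1) ^ (k - 1) \<le> sum_moment_const B m * (real n + 1) ^ m"
    using assms by (intro mult_mono power_increasing sum_moment_const_mono sum_moment_const_nonneg) auto
  ultimately show ?thesis
    unfolding sum_moment_bound_def by (simp add: algebra_simps)
qed

lemma two_term_binomial_le: "(x::real) \<ge> 0 \<Longrightarrow> x ^ Suc k + real (Suc k) * x ^ k \<le> (x + 1) ^ Suc k"
proof (induction k)
  case (Suc k)
  have "x ^ Suc (Suc k) + real (Suc (Suc k)) * x ^ Suc k
      \<le> (x + 1) * (x ^ Suc k + real (Suc k) * x ^ k)"
    using Suc.prems by (simp add: algebra_simps)
  also have "\<dots> \<le> (x + 1) * (x + 1) ^ Suc k"
    using Suc by (intro mult_left_mono) auto
  finally show ?case by simp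
qed simp

lemma sum_moment_bound_low_order:
  assumes "B \<ge> 0"
  shows "(\<Sum>k\<le>m. real (Suc (Suc m) choose k) * sum_moment_bound B k n * B)
      \<le> B * 2 ^ Suc (Suc m) * (1 + sum_moment_const B (Suc m)) * (real n + 1) ^ m"
proof -
  let ?j = "Suc (Suc m)" and ?C = "(1 + sum_moment_const B (Suc m)) * (real n + 1) ^ m"
  have "sum_moment_bound B k n \<le> ?C" if "k \<le> m" for k
    using sum_moment_const_mono[OF assms, of m "Suc m"]
    by (intro order_trans[OF sum_moment_bound_le[OF assms that]] mult_right_mono) auto
  then have "(\<Sum>k\<le>m. real (?j choose k) * sum_moment_bound B k n * B)
      \<le> (\<Sum>k\<le>m. real (?j choose k) * (?C * B))"
    unfolding mult.assoc[of "real _"] using assms by (intro sum_mono mult_left_mono mult_right_mono) auto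
  also have "\<dots> = (\<Sum>k\<le>m. real (?j choose k)) * (?C * B)"
    by (rule sum_distrib_right[symmetric])
  also have "\<dots> \<le> 2 ^ ?j * (?C * B)"
  proof (rule mult_right_mono)
    have "(\<Sum>k\<le>m. real (?j choose k)) \<le> (\<Sum>k\<le>?j. real (?j choose k))"
      by (rule sum_mono2) auto
    also have "\<dots> = 2 ^ ?j"
      by (metis choose_row_sum of_nat_numeral of_nat_power of_nat_sum)
    finally show "(\<Sum>k\<le>m. real (?j choose k)) \<le> 2 ^ ?j" .
  qed (use assms sum_moment_const_nonneg[OF assms] in auto)
  finally show ?thesis
    by (simp add: mult_ac)
qed

lemma sum_moment_bound_step:
  assumes "B \<ge> 0"
  shows "(\<Sum>k\<le>j. real (j choose k) * sum_moment_bound B k n * moment_majorant B (j - k))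
      \<le> sum_moment_bound B j (Suc n)"
proof -
  consider "j = 0" | "j = 1" | m where "j = Suc (Suc m)"
    by (metis One_nat_def not0_implies_Suc)
  then show ?thesis
  proof cases
    case 3
    define x where "x = real n"
    let ?K = "sum_moment_const B j" and ?K' = "sum_moment_const B (Suc m)"
    have x: "x \<ge> 0" by (simp add: x_def)
    have "{..j} = insert j (insert (Suc m) {..m})" using 3 by auto
    then have "(\<Sum>k\<le>j. real (j choose k) * sum_moment_bound B k n * moment_majorant B (j - k))
        = sum_moment_bound B j n + real j * sum_moment_bound B (Suc m) n
          + (\<Sum>k\<le>m. real (j choose k) * sum_moment_bound B k n * B)"
      using 3 by (auto simp: moment_majorant_def intro!: sum.cong)
    also have "\<dots> \<le> sum_moment_bound B j n + real j * sum_moment_bound B (Suc m) n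
          + B * 2 ^ j * (1 + ?K') * (x + 1) ^ m"
      using sum_moment_bound_low_order[OF assms, of m n] 3 by (simp add: x_def)
    also have "\<dots> = (x ^ Suc (Suc m) + real (Suc (Suc m)) * x ^ Suc m)
          + ?K * ((x + 1) ^ Suc m + (x + 1) ^ m)"
      unfolding sum_moment_bound_def 3 x_def by (simp add: algebra_simps)
    also have "\<dots> \<le> (x + 1) ^ Suc (Suc m) + ?K * (x + 1 + 1) ^ Suc m"
    proof (intro add_mono mult_left_mono)
      have "(x + 1) ^ m \<le> (x + 2) ^ m"
        using x by (intro power_mono) auto
      then have "(x + 2) * (x + 1) ^ m \<le> (x + 2) * (x + 2) ^ m"
        using x by (intro mult_left_mono) auto
      then show "(x + 1) ^ Suc m + (x + 1) ^ m \<le> (x + 1 + 1) ^ Suc m"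
        by (simp add: algebra_simps)
    qed (use two_term_binomial_le[OF x, of "Suc m"] sum_moment_const_nonneg[OF assms] in simp_all)
    also have "\<dots> = sum_moment_bound B j (Suc n)"
      unfolding sum_moment_bound_def 3 x_def by (simp add: add.commute)
    finally show ?thesis .
  qed (auto simp: sum_moment_bound_def moment_majorant_def)
qed

lemma sum_moment_bound_div_power_le:
  assumes "N \<ge> 1" "p \<ge> 1" "B \<ge> 0"
  shows "sum_moment_bound B p N / real N ^ p \<le> 1 + 2 ^ (p - 1) * sum_moment_const B p / real N"
proof -
  have "(real N + 1) ^ (p - 1) \<le> (2 * real N) ^ (p - 1)"
    using assms(1) by (intro power_mono) auto
  then have "sum_moment_const B p * (real N + 1) ^ (p - 1)
      \<le> sum_moment_const B p * (2 ^ (p - 1) * real N ^ (p - 1))"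
    using sum_moment_const_nonneg[OF assms(3)] by (intro mult_left_mono) (auto simp: power_mult_distrib)
  moreover have "real N ^ p = real N * real N ^ (p - 1)"
    using assms(2) by (metis Suc_diff_le diff_Suc_1 power_Suc)
  ultimately show ?thesis
    using assms(1) unfolding sum_moment_bound_def by (simp add: field_simps)
qed

lemma nn_integral_abs_add_power_le:
  fixes M :: "real measure" and c :: real
  assumes "sets M = sets borel"
  shows "(\<integral>\<^sup>+ y. ennreal (\<bar>y + c\<bar> ^ j) \<partial>M)
      \<le> (\<Sum>k\<le>j. ennreal (real (j choose k) * \<bar>c\<bar> ^ k) * (\<integral>\<^sup>+ y. ennreal (\<bar>y\<bar> ^ (j - k)) \<partial>M))"
proof -
  note [measurable_cong] = assms
  have "ennreal (\<bar>y + c\<bar> ^ j)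
      \<le> (\<Sum>k\<le>j. ennreal (real (j choose k) * \<bar>c\<bar> ^ k) * ennreal (\<bar>y\<bar> ^ (j - k)))" for y
  proof -
    have "\<bar>y + c\<bar> ^ j \<le> (\<bar>c\<bar> + \<bar>y\<bar>) ^ j"
      by (intro power_mono) auto
    also have "\<dots> = (\<Sum>k\<le>j. real (j choose k) * \<bar>c\<bar> ^ k * \<bar>y\<bar> ^ (j - k))"
      by (rule binomial_ring)
    finally have "ennreal (\<bar>y + c\<bar> ^ j)
        \<le> ennreal (\<Sum>k\<le>j. real (j choose k) * \<bar>c\<bar> ^ k * \<bar>y\<bar> ^ (j - k))"
      by (rule ennreal_leI)
    also have "\<dots> = (\<Sum>k\<le>j. ennreal (real (j choose k) * \<bar>c\<bar> ^ k * \<bar>y\<bar> ^ (j - k)))"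
      by (rule sum_ennreal[symmetric]) auto
    finally show ?thesis
      by (simp add: ennreal_mult')
  qed
  then have "(\<integral>\<^sup>+ y. ennreal (\<bar>y + c\<bar> ^ j) \<partial>M)
      \<le> (\<integral>\<^sup>+ y. (\<Sum>k\<le>j. ennreal (real (j choose k) * \<bar>c\<bar> ^ k) * ennreal (\<bar>y\<bar> ^ (j - k))) \<partial>M)"
    by (intro nn_integral_mono)
  also have "\<dots> = (\<Sum>k\<le>j. ennreal (real (j choose k) * \<bar>c\<bar> ^ k) * (\<integral>\<^sup>+ y. ennreal (\<bar>y\<bar> ^ (j - k)) \<partial>M))"
    by (simp add: nn_integral_sum nn_integral_cmult)
  finally show ?thesis .
qed

lemma nn_integral_PiM_abs_sum_power_le:
  fixes M :: "real measure" and K :: "'i set"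
  assumes M: "prob_space M" "sets M = sets borel" and "finite K" "B \<ge> 0"
    and moments: "\<And>i. i \<le> p \<Longrightarrow> (\<integral>\<^sup>+ y. ennreal (\<bar>y\<bar> ^ i) \<partial>M) \<le> ennreal (moment_majorant B i)"
    and "j \<le> p"
  shows "(\<integral>\<^sup>+ \<omega>. ennreal (\<bar>\<Sum>k\<in>K. \<omega> k\<bar> ^ j) \<partial>PiM K (\<lambda>_. M))
      \<le> ennreal (sum_moment_bound B j (card K))"
  using \<open>finite K\<close> \<open>j \<le> p\<close>
proof (induction K arbitrary: j rule: finite_induct)
  case empty
  interpret prob_space "PiM {} (\<lambda>_. M)"
    using M by (intro prob_space_PiM) auto
  show ?case
    using sum_moment_const_nonneg[OF \<open>B \<ge> 0\<close>, of j]
    by (cases j) (auto simp: emeasure_space_1 sum_moment_bound_def)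
next
  case (insert i K)
  interpret product_sigma_finite "\<lambda>_. M"
    using M by (simp add: product_sigma_finite_def prob_space_imp_sigma_finite)
  note [measurable_cong] = M(2)
  let ?P = "PiM K (\<lambda>_. M)" and ?S = "\<lambda>\<omega>. \<Sum>k\<in>K. \<omega> k"
  have "(\<integral>\<^sup>+ \<omega>. ennreal (\<bar>\<Sum>k\<in>insert i K. \<omega> k\<bar> ^ j) \<partial>PiM (insert i K) (\<lambda>_. M))
      = (\<integral>\<^sup>+ \<omega>. (\<integral>\<^sup>+ y. ennreal (\<bar>y + ?S \<omega>\<bar> ^ j) \<partial>M) \<partial>?P)"
    using insert.hyps by (simp add: product_nn_integral_insert sum.If_cases Diff_eq[symmetric])
  also have "\<dots> \<le> (\<integral>\<^sup>+ \<omega>. (\<Sum>k\<le>j. ennreal (real (j choose k) * \<bar>?S \<omega>\<bar> ^ k)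
                                * ennreal (moment_majorant B (j - k))) \<partial>?P)"
    using insert.prems
    by (intro nn_integral_mono order_trans[OF nn_integral_abs_add_power_le[OF M(2)]] sum_mono
        mult_left_mono moments) auto
  also have "\<dots> = (\<Sum>k\<le>j. ennreal (real (j choose k) * moment_majorant B (j - k))
                    * (\<integral>\<^sup>+ \<omega>. ennreal (\<bar>?S \<omega>\<bar> ^ k) \<partial>?P))"
    using \<open>B \<ge> 0\<close>
    by (simp add: nn_integral_sum nn_integral_multc nn_integral_cmult ennreal_mult' moment_majorant_def
        mult_ac)
  also have "\<dots> \<le> (\<Sum>k\<le>j. ennreal (real (j choose k) * moment_majorant B (j - k))
                    * ennreal (sum_moment_bound B k (card K)))"
    using insert.prems by (intro sum_mono mult_left_mono insert.IH) auto
  also have "\<dots> = ennreal (\<Sum>k\<le>j. real (j choose k) * sum_moment_bound B k (card K)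
                                 * moment_majorant B (j - k))"
    using \<open>B \<ge> 0\<close> sum_moment_bound_nonneg[OF \<open>B \<ge> 0\<close>]
    by (subst sum_ennreal[symmetric])
      (auto intro!: sum.cong simp: moment_majorant_def ennreal_mult'[symmetric] mult_ac)
  also have "\<dots> \<le> ennreal (sum_moment_bound B j (card (insert i K)))"
    using insert.hyps by (simp add: ennreal_leI sum_moment_bound_step[OF \<open>B \<ge> 0\<close>])
  finally show ?case .
qed

definition abs_moment_bound :: "nat \<Rightarrow> real measure \<Rightarrow> real" where
  "abs_moment_bound p m = 1 + enn2real (\<integral>\<^sup>+ y. ennreal (\<bar>y\<bar> ^ p) \<partial>m)"

definition mean_moment_const :: "nat \<Rightarrow> real measure \<Rightarrow> real" where
  "mean_moment_const p m = 2 ^ (p - 1) * sum_moment_const (abs_moment_bound p m) p"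

lemma abs_moment_bound_ge_1: "abs_moment_bound p m \<ge> 1"
  by (simp add: abs_moment_bound_def)

lemma mean_moment_const_nonneg: "mean_moment_const p m \<ge> 0"
  using sum_moment_const_nonneg abs_moment_bound_ge_1 unfolding mean_moment_const_def
  by (meson order_trans zero_le_numeral zero_le_one zero_le_power mult_nonneg_nonneg)

definition mean_one_law :: "nat \<Rightarrow> real measure \<Rightarrow> bool" where
  "mean_one_law p m \<longleftrightarrow> prob_space m \<and> sets m = sets borel \<and> (AE w in m. w \<ge> 0) \<and>
     integrable m (\<lambda>w. w) \<and> (\<integral>w. w \<partial>m) = 1 \<and> (\<integral>\<^sup>+ w. ennreal (w ^ p) \<partial>m) < \<infinity>"

lemma nn_integral_abs_power_le_moment_majorant:
  assumes "mean_one_law p m" "i \<le> p"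
  shows "(\<integral>\<^sup>+ y. ennreal (\<bar>y\<bar> ^ i) \<partial>m) \<le> ennreal (moment_majorant (abs_moment_bound p m) i)"
proof -
  note law = assms(1)[unfolded mean_one_law_def]
  interpret prob_space m using law by simp
  note [measurable_cong] = law[THEN conjunct2, THEN conjunct1]
  consider "i = 0" | "i = 1" | "2 \<le> i" by linarith
  then show ?thesis
  proof cases
    case 2
    have "(\<integral>\<^sup>+ y. ennreal \<bar>y\<bar> \<partial>m) = (\<integral>\<^sup>+ y. ennreal y \<partial>m)"
      using law by (intro nn_integral_cong_AE) auto
    also have "\<dots> = 1"
      using law by (simp add: nn_integral_eq_integral)
    finally show ?thesis
      using 2 by (simp add: moment_majorant_def)
  next
    case 3
    have "\<bar>y\<bar> ^ i \<le> 1 + \<bar>y\<bar> ^ p" for y :: real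
      by (cases "\<bar>y\<bar> \<le> 1")
        (auto intro: order_trans[OF power_le_one] order_trans[OF power_increasing[OF assms(2)]])
    then have "ennreal (\<bar>y\<bar> ^ i) \<le> 1 + ennreal (\<bar>y\<bar> ^ p)" for y :: real
      by (metis ennreal_1 ennreal_leI ennreal_plus abs_ge_zero zero_le_power zero_le_one)
    then have "(\<integral>\<^sup>+ y. ennreal (\<bar>y\<bar> ^ i) \<partial>m) \<le> (\<integral>\<^sup>+ y. 1 + ennreal (\<bar>y\<bar> ^ p) \<partial>m)"
      by (intro nn_integral_mono)
    also have "\<dots> = 1 + (\<integral>\<^sup>+ y. ennreal (\<bar>y\<bar> ^ p) \<partial>m)"
      by (simp add: nn_integral_add emeasure_space_1)
    also have "\<dots> = ennreal (abs_moment_bound p m)"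
    proof -
      have "(\<integral>\<^sup>+ y. ennreal (\<bar>y\<bar> ^ p) \<partial>m) = (\<integral>\<^sup>+ w. ennreal (w ^ p) \<partial>m)"
        using law by (intro nn_integral_cong_AE) auto
      then show ?thesis
        using law by (simp add: abs_moment_bound_def ennreal_plus ennreal_enn2real_if less_top)
    qed
    finally show ?thesis
      using 3 by (simp add: moment_majorant_def)
  qed (simp add: moment_majorant_def emeasure_space_1)
qed

lemma nn_integral_PiM_prod_blocks:
  fixes M :: "'a \<times> 'b \<Rightarrow> 'c measure" and f :: "'a \<Rightarrow> ('a \<times> 'b \<Rightarrow> 'c) \<Rightarrow> ennreal"
  assumes M: "\<And>k. sigma_finite_measure (M k)" and "finite F" "finite J"
    and f: "\<And>t. t \<in> F \<Longrightarrow> f t \<in> borel_measurable (PiM ({t} \<times> J) M)"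
    and local: "\<And>t \<omega>. t \<in> F \<Longrightarrow> f t (restrict \<omega> ({t} \<times> J)) = f t \<omega>"
  shows "(\<integral>\<^sup>+ \<omega>. (\<Prod>t\<in>F. f t \<omega>) \<partial>PiM (F \<times> J) M) = (\<Prod>t\<in>F. \<integral>\<^sup>+ \<omega>. f t \<omega> \<partial>PiM ({t} \<times> J) M)"
  using \<open>finite F\<close> f local
proof (induction F rule: finite_induct)
  case empty
  then show ?case by (simp add: PiM_empty)
next
  case (insert t F)
  interpret product_sigma_finite M
    using M by (simp add: product_sigma_finite_def)
  have meas: "f t' \<in> borel_measurable (PiM L M)" if "t' \<in> insert t F" "{t'} \<times> J \<subseteq> L" for t' L
  proof -
    have "(\<lambda>\<omega>. f t' (restrict \<omega> ({t'} \<times> J))) \<in> borel_measurable (PiM L M)"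
      using insert.prems(1)[OF that(1)] measurable_restrict_subset[OF that(2)] by measurable
    then show ?thesis
      using insert.prems(2)[OF that(1)] by simp
  qed
  have disjoint: "(F \<times> J) \<inter> ({t} \<times> J) = {}"
    using insert.hyps by auto
  have merge_local: "restrict (merge (F \<times> J) ({t} \<times> J) (x, y)) ({t'} \<times> J)
      = (if t' = t then restrict y ({t} \<times> J) else restrict x ({t'} \<times> J))"
    if "t' \<in> insert t F" for t' x y
    using that insert.hyps by (auto simp: merge_def restrict_def fun_eq_iff)
  have "(\<integral>\<^sup>+ \<omega>. (\<Prod>t'\<in>insert t F. f t' \<omega>) \<partial>PiM (insert t F \<times> J) M)
      = (\<integral>\<^sup>+ x. \<integral>\<^sup>+ y. (\<Prod>t'\<in>insert t F. f t' (merge (F \<times> J) ({t} \<times> J) (x, y)))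
            \<partial>PiM ({t} \<times> J) M \<partial>PiM (F \<times> J) M)"
  proof -
    have "insert t F \<times> J = (F \<times> J) \<union> ({t} \<times> J)" by auto
    moreover have "(\<lambda>\<omega>. \<Prod>t'\<in>insert t F. f t' \<omega>) \<in> borel_measurable (PiM ((F \<times> J) \<union> ({t} \<times> J)) M)"
      by (intro borel_measurable_prod_ennreal meas) auto
    ultimately show ?thesis
      using disjoint insert.hyps(1) \<open>finite J\<close> by (simp add: product_nn_integral_fold)
  qed
  also have "\<dots> = (\<integral>\<^sup>+ x. \<integral>\<^sup>+ y. f t y * (\<Prod>t'\<in>F. f t' x) \<partial>PiM ({t} \<times> J) M \<partial>PiM (F \<times> J) M)"
  proof -
    have "f t (merge (F \<times> J) ({t} \<times> J) (x, y)) = f t y" for x y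
      using insert.prems(2)[of t] merge_local[of t] by (metis insertI1)
    moreover have "f t' (merge (F \<times> J) ({t} \<times> J) (x, y)) = f t' x" if "t' \<in> F" for t' x y
      using insert.prems(2)[of t'] merge_local[of t'] that insert.hyps by (metis insertI2)
    ultimately show ?thesis
      using insert.hyps by (simp cong: prod.cong)
  qed
  also have "\<dots> = (\<integral>\<^sup>+ y. f t y \<partial>PiM ({t} \<times> J) M) * (\<integral>\<^sup>+ x. (\<Prod>t'\<in>F. f t' x) \<partial>PiM (F \<times> J) M)"
  proof -
    have "(\<lambda>x. \<Prod>t'\<in>F. f t' x) \<in> borel_measurable (PiM (F \<times> J) M)"
      by (intro borel_measurable_prod_ennreal meas) auto
    moreover have "f t \<in> borel_measurable (PiM ({t} \<times> J) M)"
      by (intro meas) auto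
    ultimately show ?thesis
      by (simp add: nn_integral_multc nn_integral_cmult)
  qed
  finally show ?case
    using insert by simp
qed

lemma nn_integral_PiM_abs_mean_power_le:
  fixes K :: "'i set"
  assumes law: "mean_one_law p m" and "finite K" "K \<noteq> {}" "p \<ge> 1"
  shows "(\<integral>\<^sup>+ \<omega>. ennreal (\<bar>(\<Sum>k\<in>K. \<omega> k) / real (card K)\<bar> ^ p) \<partial>PiM K (\<lambda>_. m))
      \<le> ennreal (1 + mean_moment_const p m / real (card K))"
proof -
  let ?n = "card K" and ?B = "abs_moment_bound p m"
  have n: "?n \<ge> 1"
    using assms(2,3) by (simp add: Suc_leI card_gt_0_iff)
  have m: "prob_space m" "sets m = sets borel"
    using law by (simp_all add: mean_one_law_def)
  note [measurable_cong] = m(2)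
  have "(\<integral>\<^sup>+ \<omega>. ennreal (\<bar>(\<Sum>k\<in>K. \<omega> k) / real ?n\<bar> ^ p) \<partial>PiM K (\<lambda>_. m))
      = (\<integral>\<^sup>+ \<omega>. ennreal (\<bar>\<Sum>k\<in>K. \<omega> k\<bar> ^ p) * ennreal (1 / real ?n ^ p) \<partial>PiM K (\<lambda>_. m))"
    by (intro nn_integral_cong) (simp add: abs_divide power_divide ennreal_mult'[symmetric])
  also have "\<dots> = (\<integral>\<^sup>+ \<omega>. ennreal (\<bar>\<Sum>k\<in>K. \<omega> k\<bar> ^ p) \<partial>PiM K (\<lambda>_. m)) * ennreal (1 / real ?n ^ p)"
    by (simp add: nn_integral_multc)
  also have "\<dots> \<le> ennreal (sum_moment_bound ?B p ?n) * ennreal (1 / real ?n ^ p)"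
    using abs_moment_bound_ge_1[of p m]
    by (intro mult_right_mono nn_integral_PiM_abs_sum_power_le[OF m \<open>finite K\<close>]
        nn_integral_abs_power_le_moment_majorant[OF law]) auto
  also have "\<dots> = ennreal (sum_moment_bound ?B p ?n / real ?n ^ p)"
    using sum_moment_bound_nonneg abs_moment_bound_ge_1[of p m]
    by (simp add: ennreal_mult'[symmetric] divide_inverse)
  also have "\<dots> \<le> ennreal (1 + mean_moment_const p m / real ?n)"
    using sum_moment_bound_div_power_le[OF n \<open>p \<ge> 1\<close>] abs_moment_bound_ge_1[of p m]
    by (intro ennreal_leI) (simp add: mean_moment_const_def)
  finally show ?thesis .
qed

lemma nn_integral_tail_le_moment:
  fixes Q :: "real measure"
  assumes "sets Q = sets borel" "s > 0" "p \<ge> 1"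
  shows "(\<integral>\<^sup>+ w\<in>{s..}. ennreal w \<partial>Q) \<le> ennreal (s powr (1 - real p)) * (\<integral>\<^sup>+ w. ennreal (\<bar>w\<bar> ^ p) \<partial>Q)"
proof -
  note [measurable_cong] = assms(1)
  obtain q where q: "p = Suc q"
    using assms(3) by (cases p) auto
  have "w \<le> s powr (1 - real p) * \<bar>w\<bar> ^ p" if "w \<ge> s" for w
  proof -
    have "w * s ^ q \<le> w * w ^ q"
      using that assms(2) by (intro mult_left_mono power_mono) auto
    then show ?thesis
      using that assms(2) by (simp add: q powr_minus_divide powr_realpow field_simps)
  qed
  then have "(\<integral>\<^sup>+ w\<in>{s..}. ennreal w \<partial>Q) \<le> (\<integral>\<^sup>+ w. ennreal (s powr (1 - real p)) * ennreal (\<bar>w\<bar> ^ p) \<partial>Q)"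
    by (intro nn_integral_mono) (auto simp: indicator_def ennreal_mult'[symmetric] intro!: ennreal_leI)
  also have "\<dots> = ennreal (s powr (1 - real p)) * (\<integral>\<^sup>+ w. ennreal (\<bar>w\<bar> ^ p) \<partial>Q)"
    by (simp add: nn_integral_cmult)
  finally show ?thesis .
qed

lemma tilde_pi_atLeast_le:
  fixes \<mu> :: "'x \<Rightarrow> nat \<Rightarrow> real measure"
  assumes law: "\<And>t. t \<in> {1..T} \<Longrightarrow> mean_one_law p (\<mu> x t)" and "N \<ge> 1" "p \<ge> 1" "s > 0"
  shows "tilde_pi \<mu> T N x {s..}
      \<le> ennreal (s powr (1 - real p)) * ennreal (\<Prod>t\<in>{1..T}. 1 + mean_moment_const p (\<mu> x t) / real N)"
proof -
  \<comment> \<open>Outside the index set the laws are irrelevant; a dummy law keeps every factor a probability space.\<close>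
  define M where "M k = (if fst k \<in> {1..T} then \<mu> x (fst k) else return borel 0)" for k :: "nat \<times> nat"
  have M: "prob_space (M k)" "sets (M k) = sets borel" for k
    using law by (auto simp: M_def mean_one_law_def prob_space_return)
  note [measurable_cong] = M(2)
  define P where "P = PiM ({1..T} \<times> {..<N}) M"
  define A where "A t \<omega> = (\<Sum>i<N. \<omega> (t, i)) / real N" for t and \<omega> :: "nat \<times> nat \<Rightarrow> real"
  have A_measurable: "A t \<in> borel_measurable (PiM L M)" if "{t} \<times> {..<N} \<subseteq> L" for t L
    unfolding A_def by measurable (use that in auto)
  have "W_prod T N \<in> borel_measurable P"
    unfolding W_prod_def P_def using A_measurable by measurable
  have "Q_law \<mu> T N x = distr P borel (W_prod T N)"
    unfolding Q_law_def P_def by (intro arg_cong2[where f="\<lambda>M f. distr M borel f"] PiM_cong) (auto simp: M_def)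
  then have "tilde_pi \<mu> T N x {s..}
      \<le> ennreal (s powr (1 - real p)) * (\<integral>\<^sup>+ \<omega>. ennreal (\<bar>W_prod T N \<omega>\<bar> ^ p) \<partial>P)"
    using nn_integral_tail_le_moment[of "Q_law \<mu> T N x", OF _ \<open>s > 0\<close> \<open>p \<ge> 1\<close>] \<open>W_prod T N \<in> _\<close>
    by (simp add: tilde_pi_def nn_integral_distr)
  also have "(\<integral>\<^sup>+ \<omega>. ennreal (\<bar>W_prod T N \<omega>\<bar> ^ p) \<partial>P)
      = (\<integral>\<^sup>+ \<omega>. (\<Prod>t\<in>{1..T}. ennreal (\<bar>A t \<omega>\<bar> ^ p)) \<partial>P)"
    by (simp add: W_prod_def A_def abs_prod prod_power_distrib prod_ennreal)
  also have "\<dots> = (\<Prod>t\<in>{1..T}. \<integral>\<^sup>+ \<omega>. ennreal (\<bar>A t \<omega>\<bar> ^ p) \<partial>PiM ({t} \<times> {..<N}) M)"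
    unfolding P_def using M(1) A_measurable
    by (intro nn_integral_PiM_prod_blocks) (auto simp: A_def prob_space_imp_sigma_finite)
  also have "\<dots> \<le> (\<Prod>t\<in>{1..T}. ennreal (1 + mean_moment_const p (\<mu> x t) / real N))"
  proof (intro prod_mono_ennreal)
    fix t assume t: "t \<in> {1..T}"
    have "PiM ({t} \<times> {..<N}) M = PiM ({t} \<times> {..<N}) (\<lambda>_. \<mu> x t)"
      using t by (intro PiM_cong) (auto simp: M_def)
    moreover have "A t \<omega> = (\<Sum>k\<in>{t} \<times> {..<N}. \<omega> k) / real (card ({t} \<times> {..<N}))" for \<omega>
      by (simp add: A_def sum.cartesian_product' card_cartesian_product)
    ultimately show "(\<integral>\<^sup>+ \<omega>. ennreal (\<bar>A t \<omega>\<bar> ^ p) \<partial>PiM ({t} \<times> {..<N}) M)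
        \<le> ennreal (1 + mean_moment_const p (\<mu> x t) / real N)"
      using nn_integral_PiM_abs_mean_power_le[OF law[OF t], of "{t} \<times> {..<N}"] \<open>N \<ge> 1\<close> \<open>p \<ge> 1\<close>
      by (simp add: card_cartesian_product lessThan_empty_iff)
  qed
  also have "\<dots> = ennreal (\<Prod>t\<in>{1..T}. 1 + mean_moment_const p (\<mu> x t) / real N)"
    by (rule prod_ennreal) (simp add: mean_moment_const_nonneg)
  finally show ?thesis
    by (simp add: mult_left_mono)
qed

lemma borel_measurable_sum_moment_const[measurable]:
  "f \<in> borel_measurable M \<Longrightarrow> (\<lambda>x. sum_moment_const (f x) j) \<in> borel_measurable M"
  by (induction j) simp_all

lemma borel_measurable_mean_moment_const:
  assumes "\<kappa> \<in> measurable M (subprob_algebra borel)"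
  shows "(\<lambda>x. mean_moment_const p (\<kappa> x)) \<in> borel_measurable M"
proof -
  have "(\<lambda>y::real. ennreal (\<bar>y\<bar> ^ p)) \<in> borel_measurable borel"
    by measurable
  then have [measurable]: "(\<lambda>x. \<integral>\<^sup>+ y. ennreal (\<bar>y\<bar> ^ p) \<partial>\<kappa> x) \<in> borel_measurable M"
    using measurable_compose[OF assms nn_integral_measurable_subprob_algebra] by simp
  show ?thesis
    unfolding mean_moment_const_def abs_moment_bound_def by measurable
qed

lemma prod_one_plus_div_le_exp:
  fixes c :: "'a \<Rightarrow> real"
  assumes "finite A" "\<And>t. t \<in> A \<Longrightarrow> c t \<ge> 0" "0 < \<alpha>" "\<alpha> \<le> N"
  shows "(\<Prod>t\<in>A. 1 + c t / N) \<le> exp ((\<Sum>t\<in>A. c t) / \<alpha>)"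
proof -
  have "(\<Prod>t\<in>A. 1 + c t / N) \<le> exp (\<Sum>t\<in>A. c t / N)"
    using assms by (intro prod_le_exp_sum) auto
  also have "(\<Sum>t\<in>A. c t / N) = (\<Sum>t\<in>A. c t) / N"
    by (simp add: sum_divide_distrib)
  also have "\<dots> \<le> (\<Sum>t\<in>A. c t) / \<alpha>"
    using assms by (intro divide_left_mono sum_nonneg) auto
  finally show ?thesis
    by simp
qed

lemma tilde_pi_atLeast_le_exp:
  fixes \<mu> :: "'x \<Rightarrow> nat \<Rightarrow> real measure"
  assumes law: "\<And>t. t \<in> {1..T} \<Longrightarrow> mean_one_law p (\<mu> x t)"
    and C: "(\<Sum>t\<in>{1..T}. mean_moment_const p (\<mu> x t)) \<le> C"
    and "0 < \<alpha>" "\<alpha> \<le> real N" "p \<ge> 1" "s > 0"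
  shows "tilde_pi \<mu> T N x {s..} \<le> ennreal (s powr (1 - real p)) * ennreal (exp (C / \<alpha>))"
proof -
  have "N \<ge> 1"
    using assms(3,4) by simp
  then have "tilde_pi \<mu> T N x {s..}
      \<le> ennreal (s powr (1 - real p)) * ennreal (\<Prod>t\<in>{1..T}. 1 + mean_moment_const p (\<mu> x t) / real N)"
    using assms by (intro tilde_pi_atLeast_le)
  also have "(\<Prod>t\<in>{1..T}. 1 + mean_moment_const p (\<mu> x t) / real N)
      \<le> exp ((\<Sum>t\<in>{1..T}. mean_moment_const p (\<mu> x t)) / \<alpha>)"
    using assms by (intro prod_one_plus_div_le_exp mean_moment_const_nonneg) auto
  also have "\<dots> \<le> exp (C / \<alpha>)"
    using C \<open>0 < \<alpha>\<close> by (simp add: divide_right_mono)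
  finally show ?thesis
    by (simp add: ennreal_leI mult_left_mono)
qed

theorem proposition49:
  fixes \<pi> :: "'x measure" and \<mu> :: "'x \<Rightarrow> nat \<Rightarrow> real measure"
    and T :: nat and p :: nat
  assumes "prob_space \<pi>"
    and "T \<ge> 1"
    and "p \<ge> 2"
    and kernel: "\<And>t. t \<in> {1..T} \<Longrightarrow> (\<lambda>x. \<mu> x t) \<in> measurable \<pi> (subprob_algebra borel)"
    and law: "\<And>x t. x \<in> space \<pi> \<Longrightarrow> t \<in> {1..T} \<Longrightarrow> prob_space (\<mu> x t)"
    and sets_law: "\<And>x t. x \<in> space \<pi> \<Longrightarrow> t \<in> {1..T} \<Longrightarrow> sets (\<mu> x t) = sets borel"
    and nonneg: "\<And>x t. x \<in> space \<pi> \<Longrightarrow> t \<in> {1..T} \<Longrightarrow> AE w in \<mu> x t. w \<ge> 0"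
    and mean1: "\<And>x t. x \<in> space \<pi> \<Longrightarrow> t \<in> {1..T} \<Longrightarrow>
                  integrable (\<mu> x t) (\<lambda>w. w) \<and> (\<integral>w. w \<partial>\<mu> x t) = 1"
    and moment: "\<And>x t. x \<in> space \<pi> \<Longrightarrow> t \<in> {1..T} \<Longrightarrow>
                  (\<integral>\<^sup>+ w. ennreal (w ^ p) \<partial>\<mu> x t) < \<infinity>"
  shows "\<exists>M :: 'x \<Rightarrow> real. M \<in> borel_measurable \<pi> \<and> (\<forall>x \<in> space \<pi>. M x > 0) \<and>
           (\<forall>(N :: nat) (\<alpha> :: real). \<alpha> > 0 \<and> real N \<ge> \<alpha> * real T + 1/2 + sqrt (\<alpha> * real T) \<longrightarrow>
              (\<forall>s :: real. s > 0 \<longrightarrow>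
                 (\<integral>\<^sup>+ x. tilde_pi \<mu> T N x {s..} \<partial>\<pi>)
                 \<le> ennreal (s powr (1 - real p)) * (\<integral>\<^sup>+ x. ennreal (exp (M x / \<alpha>)) \<partial>\<pi>)))"
proof -
  define M where "M x = 1 + (\<Sum>t\<in>{1..T}. mean_moment_const p (\<mu> x t))" for x
  have M_measurable: "M \<in> borel_measurable \<pi>"
    unfolding M_def using kernel borel_measurable_mean_moment_const by measurable
  show ?thesis
  proof (intro exI conjI ballI allI impI)
    show "M \<in> borel_measurable \<pi>"
      by (fact M_measurable)
    show "0 < M x" for x
      by (simp add: M_def add_pos_nonneg sum_nonneg mean_moment_const_nonneg)
    fix N :: nat and \<alpha> s :: real
    assume size: "0 < \<alpha> \<and> \<alpha> * real T + 1 / 2 + sqrt (\<alpha> * real T) \<le> real N" and "0 < s"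
    have "\<alpha> \<le> \<alpha> * real T" "0 \<le> sqrt (\<alpha> * real T)"
      using \<open>T \<ge> 1\<close> size by simp_all
    then have "\<alpha> \<le> real N"
      using size by linarith
    have "tilde_pi \<mu> T N x {s..} \<le> ennreal (s powr (1 - real p)) * ennreal (exp (M x / \<alpha>))"
      if "x \<in> space \<pi>" for x
      using that size \<open>\<alpha> \<le> real N\<close> \<open>0 < s\<close> \<open>p \<ge> 2\<close> law sets_law nonneg mean1 moment
      by (intro tilde_pi_atLeast_le_exp) (auto simp: mean_one_law_def M_def)
    then show "(\<integral>\<^sup>+ x. tilde_pi \<mu> T N x {s..} \<partial>\<pi>)
        \<le> ennreal (s powr (1 - real p)) * (\<integral>\<^sup>+ x. ennreal (exp (M x / \<alpha>)) \<partial>\<pi>)"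
      using M_measurable by (simp add: nn_integral_mono nn_integral_cmult[symmetric])
  qed
qed

end
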